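(* Let $(\mathcal{X},d)$ be a Polish metric space and let $(X_N)_{N\in\mathbb{N}}$ be a Markov chain on $\mathcal{X}$ with transition kernel $(P_x)_{x\in\mathcal{X}}$, where $x\mapsto P_x$ is measurable and each $P_x$ has finite first moment. Assume there exists $\kappa>0$ such that $W_1(P_x,P_y)\le(1-\kappa)\,d(x,y)$ for all $x,y\in\mathcal{X}$, and let $\pi$ be the (unique) invariant probability measure of the chain. Let $T\ge1$ and $T_0\ge0$ be integers and set $\hat\pi(f):=\frac1T\sum_{k=T_0+1}^{T_0+T}f(X_k)$. Then for every Lipschitz function $f:\mathcal{X}\to\mathbb{R}$ and every $x\in\mathcal{X}$, \[ |\mathbb{E}_x\hat\pi(f)-\pi(f)|\le\frac{(1-\kappa)^{T_0+1}}{\kappa T}\,E(x)\,\|f\|_{\mathrm{Lip}}. \]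
   Context: $W_1(\mu_1,\mu_2)=\inf_{\xi}\int\!\!\int d(x,y)\,\xi(dx,dy)$, the infimum over couplings $\xi$ of $\mu_1,\mu_2$, is the $L^1$ Wasserstein distance. $\mathbb{E}_x$ denotes expectation for the chain started at $X_0=x$. The eccentricity is $E(x):=\int_{\mathcal{X}}d(x,y)\,\pi(dy)$. $\|f\|_{\mathrm{Lip}}:=\sup_{x\ne y}|f(x)-f(y)|/d(x,y)$, and $\pi(f)=\int f\,d\pi$. *)

theory Defs
  imports "HOL-Probability.Probability"
begin

definition coupling :: "('a::metric_space \<times> 'a) measure \<Rightarrow> 'a measure \<Rightarrow> 'a measure \<Rightarrow> bool" where
  "coupling \<xi> \<mu> \<nu> \<longleftrightarrow> prob_space \<xi> \<and> sets \<xi> = sets (borel \<Otimes>\<^sub>M borel) \<and>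
     distr \<xi> borel fst = \<mu> \<and> distr \<xi> borel snd = \<nu>"

text \<open>L^1 Wasserstein distance: infimum of the transport cost over couplings
  (couplings with non-integrable cost have cost +infinity and do not contribute).\<close>
definition W1 :: "'a::metric_space measure \<Rightarrow> 'a measure \<Rightarrow> real" where
  "W1 \<mu> \<nu> = Inf {(\<integral>p. dist (fst p) (snd p) \<partial>\<xi>) | \<xi>.
       coupling \<xi> \<mu> \<nu> \<and> integrable \<xi> (\<lambda>p. dist (fst p) (snd p))}"

text \<open>n-step transition kernel: law of X_n for the chain started at X_0 = x.\<close>
primrec kpow :: "('a::topological_space \<Rightarrow> 'a measure) \<Rightarrow> nat \<Rightarrow> 'a \<Rightarrow> 'a measure" where
  "kpow P 0 x = return borel x"
| "kpow P (Suc n) x = kpow P n x \<bind> P"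

definition eccentricity :: "'a::metric_space measure \<Rightarrow> 'a \<Rightarrow> real" where
  "eccentricity \<pi> x = (\<integral>y. dist x y \<partial>\<pi>)"

definition lip_norm :: "('a::metric_space \<Rightarrow> real) \<Rightarrow> real" where
  "lip_norm f = Sup {\<bar>f x - f y\<bar> / dist x y | x y. x \<noteq> y}"

end

theory Submission
  imports Defs
begin

text \<open>The Markov operator \<open>(P h)(z) = \<integral> h dP\<^sub>z\<close> maps \<open>C\<close>-Lipschitz functions to
  \<open>(1 - \<kappa>) C\<close>-Lipschitz ones, because by the easy half of Kantorovich--Rubinstein duality
  \<open>\<bar>P h(z) - P h(y)\<bar> \<le> C W\<^sub>1(P\<^sub>z, P\<^sub>y)\<close>. By invariance, \<open>E\<^sub>x f(X\<^sub>k) - \<pi>(f) = P\<^sup>k f(x) - \<pi>(P\<^sup>k f)\<close>,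
  which is at most \<open>(1 - \<kappa>)\<^sup>k \<parallel>f\<parallel>\<^sub>L\<^sub>i\<^sub>p E(x)\<close> in absolute value; averaging over \<open>k\<close> sums a
  geometric series.

  Invariance can only be applied to \<open>\<pi>\<close>-integrable functions, so one first shows that \<open>\<pi>\<close> has a
  finite first moment. For the bounded truncations \<open>h = min (d(x, \<cdot>)) R\<close> invariance is free, and
  \<open>P\<^sup>n h \<le> E\<^sub>x d(x, X\<^sub>n) + min ((1 - \<kappa>)\<^sup>n d(x, \<cdot>)) R\<close> with \<open>E\<^sub>x d(x, X\<^sub>n) \<le> E\<^sub>x d(x, X\<^sub>1) / \<kappa>\<close>;
  letting \<open>n \<rightarrow> \<infinity>\<close> and then \<open>R \<rightarrow> \<infinity>\<close> bounds \<open>E(x)\<close>.\<close>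

lemma borel_measurable_lipschitz:
  fixes h :: "'a::metric_space \<Rightarrow> 'b::metric_space"
  assumes "C-lipschitz_on UNIV h"
  shows "h \<in> borel_measurable borel"
  using lipschitz_on_continuous_on[OF assms] by (rule borel_measurable_continuous_onI)

lemma lipschitz_on_dist: "1-lipschitz_on UNIV (\<lambda>y. dist w y)"
  by (rule lipschitz_onI) (metis abs_dist_diff_le dist_commute dist_real_def mult_1, simp)

lemma lipschitz_on_min_const:
  fixes h :: "'a::metric_space \<Rightarrow> real"
  assumes "C-lipschitz_on UNIV h"
  shows "C-lipschitz_on UNIV (\<lambda>y. min (h y) R)"
proof (rule lipschitz_onI)
  fix a b
  have "\<bar>min (h a) R - min (h b) R\<bar> \<le> \<bar>h a - h b\<bar>" by (simp add: min_def; arith)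
  then show "dist (min (h a) R) (min (h b) R) \<le> C * dist a b"
    using lipschitz_onD[OF assms, of a b] by (simp add: dist_real_def)
qed (rule lipschitz_on_nonneg[OF assms])

lemma integrable_lipschitz:
  fixes h :: "'a::metric_space \<Rightarrow> real"
  assumes h: "C-lipschitz_on UNIV h"
    and M: "finite_measure M" "sets M = sets borel" and moment: "integrable M (\<lambda>y. dist w y)"
  shows "integrable M h"
proof (rule Bochner_Integration.integrable_bound)
  show "integrable M (\<lambda>y. \<bar>h w\<bar> + C * dist w y)"
    using M(1) moment by (intro Bochner_Integration.integrable_add finite_measure.integrable_const integrable_mult_right)
  show "h \<in> borel_measurable M"
    using borel_measurable_lipschitz[OF h] M(2) by (simp cong: measurable_cong_sets)
  have "\<bar>h y\<bar> \<le> \<bar>h w\<bar> + C * dist w y" for y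
    using lipschitz_onD[OF h, of y w] by (simp add: dist_real_def dist_commute)
  then show "AE y in M. norm (h y) \<le> norm (\<bar>h w\<bar> + C * dist w y)"
    using lipschitz_on_nonneg[OF h] by (intro AE_I2) simp
qed

lemma lipschitz_integral_deviation:
  fixes h :: "'a::metric_space \<Rightarrow> real"
  assumes h: "C-lipschitz_on UNIV h"
    and \<mu>: "prob_space \<mu>" "sets \<mu> = sets borel" "integrable \<mu> (\<lambda>y. dist x y)"
  shows "\<bar>h x - (\<integral>y. h y \<partial>\<mu>)\<bar> \<le> C * (\<integral>y. dist x y \<partial>\<mu>)"
proof -
  interpret prob_space \<mu> by (fact \<mu>(1))
  have ih: "integrable \<mu> h" by (rule integrable_lipschitz[OF h finite_measure \<mu>(2,3)])
  have "h x - (\<integral>y. h y \<partial>\<mu>) = (\<integral>y. h x - h y \<partial>\<mu>)"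
    using ih by (simp add: prob_space)
  also have "\<bar>\<dots>\<bar> \<le> (\<integral>y. \<bar>h x - h y\<bar> \<partial>\<mu>)"
    by (rule integral_abs_bound)
  also have "\<dots> \<le> (\<integral>y. C * dist x y \<partial>\<mu>)"
    using ih \<mu>(3) lipschitz_onD[OF h] by (intro integral_mono) (auto simp: dist_real_def)
  finally show ?thesis by simp
qed

lemma coupling_pair_measure:
  assumes \<mu>: "prob_space \<mu>" "sets \<mu> = sets borel" and \<nu>: "prob_space \<nu>" "sets \<nu> = sets borel"
  shows "coupling (\<mu> \<Otimes>\<^sub>M \<nu>) \<mu> \<nu>"
proof -
  have "distr (\<mu> \<Otimes>\<^sub>M \<nu>) borel fst = distr (\<mu> \<Otimes>\<^sub>M \<nu>) \<mu> fst"
    using \<mu>(2) by (intro distr_cong) auto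
  also have "\<dots> = \<mu>" using \<nu>(1) by (rule prob_space.distr_pair_fst)
  finally have fst: "distr (\<mu> \<Otimes>\<^sub>M \<nu>) borel fst = \<mu>" .
  interpret pair_sigma_finite \<mu> \<nu>
    using \<mu>(1) \<nu>(1) by (intro pair_sigma_finite.intro prob_space_imp_sigma_finite)
  have "distr (\<mu> \<Otimes>\<^sub>M \<nu>) borel snd = distr (\<mu> \<Otimes>\<^sub>M \<nu>) \<nu> snd"
    using \<nu>(2) by (intro distr_cong) auto
  also have "\<dots> = distr (distr (\<nu> \<Otimes>\<^sub>M \<mu>) (\<mu> \<Otimes>\<^sub>M \<nu>) (\<lambda>(x, y). (y, x))) \<nu> snd"
    by (rule arg_cong[where f = "\<lambda>M. distr M \<nu> snd"], rule distr_pair_swap)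
  also have "\<dots> = distr (\<nu> \<Otimes>\<^sub>M \<mu>) \<nu> fst"
    by (subst distr_distr) (auto simp: comp_def case_prod_beta)
  also have "\<dots> = \<nu>" using \<mu>(1) by (rule prob_space.distr_pair_fst)
  finally have snd: "distr (\<mu> \<Otimes>\<^sub>M \<nu>) borel snd = \<nu>" .
  show ?thesis
    unfolding coupling_def using fst snd prob_space_pair[OF \<mu>(1) \<nu>(1)]
      sets_pair_measure_cong[OF \<mu>(2) \<nu>(2)] by blast
qed

lemma coupling_marginal_integrals:
  fixes g :: "'a::metric_space \<Rightarrow> real"
  assumes \<xi>: "coupling \<xi> \<mu> \<nu>" and g: "g \<in> borel_measurable borel"
    and "integrable \<mu> g" "integrable \<nu> g"
  shows "integrable \<xi> (\<lambda>p. g (fst p))" "(\<integral>p. g (fst p) \<partial>\<xi>) = (\<integral>y. g y \<partial>\<mu>)"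
    and "integrable \<xi> (\<lambda>p. g (snd p))" "(\<integral>p. g (snd p) \<partial>\<xi>) = (\<integral>y. g y \<partial>\<nu>)"
proof -
  have sets: "sets \<xi> = sets (borel \<Otimes>\<^sub>M borel)" using \<xi> by (simp add: coupling_def)
  have fst: "fst \<in> \<xi> \<rightarrow>\<^sub>M borel" and snd: "snd \<in> \<xi> \<rightarrow>\<^sub>M borel"
    using sets by (simp_all cong: measurable_cong_sets)
  show "integrable \<xi> (\<lambda>p. g (fst p))" "(\<integral>p. g (fst p) \<partial>\<xi>) = (\<integral>y. g y \<partial>\<mu>)"
    using assms integrable_distr_eq[OF fst g] integral_distr[OF fst g] by (auto simp: coupling_def)
  show "integrable \<xi> (\<lambda>p. g (snd p))" "(\<integral>p. g (snd p) \<partial>\<xi>) = (\<integral>y. g y \<partial>\<nu>)"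
    using assms integrable_distr_eq[OF snd g] integral_distr[OF snd g] by (auto simp: coupling_def)
qed

lemma integrable_dist_pair_measure:
  fixes \<mu> \<nu> :: "'a::{metric_space, second_countable_topology} measure"
  assumes \<mu>: "prob_space \<mu>" "sets \<mu> = sets borel" "integrable \<mu> (\<lambda>y. dist w y)"
    and \<nu>: "prob_space \<nu>" "sets \<nu> = sets borel" "integrable \<nu> (\<lambda>y. dist w y)"
  shows "integrable (\<mu> \<Otimes>\<^sub>M \<nu>) (\<lambda>p. dist (fst p) (snd p))"
proof (rule Bochner_Integration.integrable_bound)
  note marginals = coupling_marginal_integrals[OF coupling_pair_measure[OF \<mu>(1,2) \<nu>(1,2)]
      borel_measurable_lipschitz[OF lipschitz_on_dist] \<mu>(3) \<nu>(3)]
  show "integrable (\<mu> \<Otimes>\<^sub>M \<nu>) (\<lambda>p. dist w (fst p) + dist w (snd p))"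
    using marginals(1,3) by (rule Bochner_Integration.integrable_add)
  show "(\<lambda>p. dist (fst p) (snd p)) \<in> borel_measurable (\<mu> \<Otimes>\<^sub>M \<nu>)"
    by (subst measurable_cong_sets[OF sets_pair_measure_cong[OF \<mu>(2) \<nu>(2)] refl]) measurable
  show "AE p in \<mu> \<Otimes>\<^sub>M \<nu>. norm (dist (fst p) (snd p)) \<le> norm (dist w (fst p) + dist w (snd p))"
    by (intro AE_I2) (simp add: dist_triangle3)
qed

lemma W1_lower_bounds:
  fixes h :: "'a::{metric_space, second_countable_topology} \<Rightarrow> real"
  assumes \<mu>: "prob_space \<mu>" "sets \<mu> = sets borel" "integrable \<mu> (\<lambda>y. dist w y)"
    and \<nu>: "prob_space \<nu>" "sets \<nu> = sets borel" "integrable \<nu> (\<lambda>y. dist w y)"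
  shows W1_nonneg: "0 \<le> W1 \<mu> \<nu>"
    and lipschitz_integral_diff_le_W1:
      "C-lipschitz_on UNIV h \<Longrightarrow> \<bar>(\<integral>y. h y \<partial>\<mu>) - (\<integral>y. h y \<partial>\<nu>)\<bar> \<le> C * W1 \<mu> \<nu>"
proof -
  let ?S = "{(\<integral>p. dist (fst p) (snd p) \<partial>\<xi>) | \<xi>.
       coupling \<xi> \<mu> \<nu> \<and> integrable \<xi> (\<lambda>p. dist (fst p) (snd p))}"
  have W1: "W1 \<mu> \<nu> = Inf ?S" by (simp add: W1_def)
  have "(\<integral>p. dist (fst p) (snd p) \<partial>(\<mu> \<Otimes>\<^sub>M \<nu>)) \<in> ?S"
    using coupling_pair_measure[OF \<mu>(1,2) \<nu>(1,2)] integrable_dist_pair_measure[OF \<mu> \<nu>] by blast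
  then have nonempty: "?S \<noteq> {}" by blast
  show "0 \<le> W1 \<mu> \<nu>"
    unfolding W1 using nonempty by (intro cInf_greatest) auto
  assume h: "C-lipschitz_on UNIV h"
  have cost: "\<bar>(\<integral>y. h y \<partial>\<mu>) - (\<integral>y. h y \<partial>\<nu>)\<bar> \<le> C * s" if "s \<in> ?S" for s
  proof -
    from that obtain \<xi> where s: "s = (\<integral>p. dist (fst p) (snd p) \<partial>\<xi>)" and \<xi>: "coupling \<xi> \<mu> \<nu>"
      and cost: "integrable \<xi> (\<lambda>p. dist (fst p) (snd p))" by blast
    note marginals = coupling_marginal_integrals[OF \<xi> borel_measurable_lipschitz[OF h]
        integrable_lipschitz[OF h prob_space.finite_measure[OF \<mu>(1)] \<mu>(2,3)]
        integrable_lipschitz[OF h prob_space.finite_measure[OF \<nu>(1)] \<nu>(2,3)]]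
    have "(\<integral>y. h y \<partial>\<mu>) - (\<integral>y. h y \<partial>\<nu>) = (\<integral>p. h (fst p) - h (snd p) \<partial>\<xi>)"
      using marginals by simp
    also have "\<bar>\<dots>\<bar> \<le> (\<integral>p. \<bar>h (fst p) - h (snd p)\<bar> \<partial>\<xi>)"
      by (rule integral_abs_bound)
    also have "\<dots> \<le> (\<integral>p. C * dist (fst p) (snd p) \<partial>\<xi>)"
      using marginals cost lipschitz_onD[OF h] by (intro integral_mono) (auto simp: dist_real_def)
    finally show ?thesis by (simp add: s)
  qed
  show "\<bar>(\<integral>y. h y \<partial>\<mu>) - (\<integral>y. h y \<partial>\<nu>)\<bar> \<le> C * W1 \<mu> \<nu>"
  proof (cases "C = 0")
    case True
    then show ?thesis using cost nonempty by auto
  next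
    case False
    then have "0 < C" using lipschitz_on_nonneg[OF h] by simp
    then have "\<bar>(\<integral>y. h y \<partial>\<mu>) - (\<integral>y. h y \<partial>\<nu>)\<bar> / C \<le> Inf ?S"
      using cost nonempty by (intro cInf_greatest) (auto simp: divide_le_eq mult.commute)
    then show ?thesis using \<open>0 < C\<close> by (simp add: W1 divide_le_eq mult.commute)
  qed
qed

lemma integral_bind_nonneg:
  fixes g :: "'b \<Rightarrow> real"
  assumes N: "N \<in> M \<rightarrow>\<^sub>M subprob_algebra B" and M: "space M \<noteq> {}"
    and g: "g \<in> borel_measurable B" and nonneg: "\<And>y. 0 \<le> g y"
    and integrable_N: "\<And>x. integrable (N x) g"
    and integrable_M: "integrable M (\<lambda>x. \<integral>y. g y \<partial>N x)"
  shows "integrable (M \<bind> N) g" "(\<integral>y. g y \<partial>(M \<bind> N)) = (\<integral>x. (\<integral>y. g y \<partial>N x) \<partial>M)"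
proof -
  have g': "g \<in> borel_measurable (M \<bind> N)"
    using g sets_bind_measurable[OF N M] by (simp cong: measurable_cong_sets)
  have "(\<integral>\<^sup>+y. g y \<partial>(M \<bind> N)) = (\<integral>\<^sup>+x. (\<integral>\<^sup>+y. g y \<partial>N x) \<partial>M)"
    using g by (intro nn_integral_bind[OF _ N]) measurable
  also have "\<dots> = (\<integral>\<^sup>+x. ennreal (\<integral>y. g y \<partial>N x) \<partial>M)"
    using integrable_N nonneg by (intro nn_integral_cong nn_integral_eq_integral) auto
  also have "\<dots> = ennreal (\<integral>x. (\<integral>y. g y \<partial>N x) \<partial>M)"
    using integrable_M nonneg by (intro nn_integral_eq_integral) (auto intro: Bochner_Integration.integral_nonneg)
  finally have nn: "(\<integral>\<^sup>+y. g y \<partial>(M \<bind> N)) = ennreal (\<integral>x. (\<integral>y. g y \<partial>N x) \<partial>M)" .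
  show "integrable (M \<bind> N) g"
    using g' nonneg nn by (intro integrableI_nn_integral_finite) auto
  show "(\<integral>y. g y \<partial>(M \<bind> N)) = (\<integral>x. (\<integral>y. g y \<partial>N x) \<partial>M)"
    using g' nonneg nn by (subst integral_eq_nn_integral)
      (auto intro: Bochner_Integration.integral_nonneg)
qed

lemma tendsto_integral_min_power:
  fixes f :: "'b \<Rightarrow> real"
  assumes \<mu>: "finite_measure \<mu>" and f: "f \<in> borel_measurable \<mu>" "\<And>z. 0 \<le> f z"
    and \<rho>: "0 \<le> \<rho>" "\<rho> < 1" and R: "0 \<le> R"
  shows "(\<lambda>n. \<integral>z. min (\<rho> ^ n * f z) R \<partial>\<mu>) \<longlonglongrightarrow> 0"
proof -
  have "(\<lambda>n. \<integral>z. min (\<rho> ^ n * f z) R \<partial>\<mu>) \<longlonglongrightarrow> (\<integral>z. 0 \<partial>\<mu>)"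
  proof (rule integral_dominated_convergence[where w = "\<lambda>_. R"])
    show "integrable \<mu> (\<lambda>_. R)" using \<mu> by (rule finite_measure.integrable_const)
    have "(\<lambda>n. min (\<rho> ^ n * f z) R) \<longlonglongrightarrow> min (0 * f z) R" for z
      using \<rho> by (intro tendsto_min tendsto_mult_right LIMSEQ_power_zero tendsto_const) simp
    then show "AE z in \<mu>. (\<lambda>n. min (\<rho> ^ n * f z) R) \<longlonglongrightarrow> 0"
      using R by simp
    show "AE z in \<mu>. norm (min (\<rho> ^ n * f z) R) \<le> R" for n
      using f(2) \<rho> R by (intro AE_I2) (simp add: abs_le_iff)
  qed (use f in simp_all)
  then show ?thesis by simp
qed

lemma abs_average_diff_le:
  fixes a e :: "'i \<Rightarrow> real"
  assumes K: "card K = T" "0 < T" and bound: "\<And>k. k \<in> K \<Longrightarrow> \<bar>a k - b\<bar> \<le> e k"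
  shows "\<bar>(1 / real T) * (\<Sum>k\<in>K. a k) - b\<bar> \<le> (1 / real T) * (\<Sum>k\<in>K. e k)"
proof -
  have "(1 / real T) * (\<Sum>k\<in>K. a k) - b = (1 / real T) * (\<Sum>k\<in>K. a k - b)"
    using K by (simp add: sum_subtractf field_simps)
  also have "\<bar>\<dots>\<bar> = (1 / real T) * \<bar>\<Sum>k\<in>K. a k - b\<bar>"
    by (simp add: abs_mult)
  also have "\<dots> \<le> (1 / real T) * (\<Sum>k\<in>K. \<bar>a k - b\<bar>)"
    by (intro mult_left_mono sum_abs) simp
  also have "\<dots> \<le> (1 / real T) * (\<Sum>k\<in>K. e k)"
    using bound by (intro mult_left_mono sum_mono) auto
  finally show ?thesis .
qed

lemma sum_power_le_geometric:
  fixes \<rho> :: real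
  assumes "0 \<le> \<rho>" "\<rho> < 1"
  shows "(\<Sum>k = m..n. \<rho> ^ k) \<le> \<rho> ^ m / (1 - \<rho>)"
proof (cases "m \<le> n")
  case True
  then have "(1 - \<rho>) * (\<Sum>k = m..n. \<rho> ^ k) \<le> \<rho> ^ m"
    using assms by (simp add: sum_gp_multiplied)
  then show ?thesis using assms by (simp add: le_divide_eq mult.commute)
qed (use assms in simp)

text \<open>On a one-point space \<open>lip_norm f = Sup {}\<close> is a junk value; the two distinct points
  exclude this case.\<close>
lemma lipschitz_on_lip_norm:
  fixes f :: "'a::metric_space \<Rightarrow> real" and x y :: 'a
  assumes f: "C-lipschitz_on UNIV f" and "x \<noteq> y"
  shows "(lip_norm f)-lipschitz_on UNIV f"
proof -
  let ?Q = "{\<bar>f a - f b\<bar> / dist a b | a b. a \<noteq> b}"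
  have bdd: "bdd_above ?Q"
    using lipschitz_onD[OF f] by (intro bdd_aboveI[of _ C]) (auto simp: divide_le_eq dist_real_def)
  have quotient_le: "\<bar>f a - f b\<bar> / dist a b \<le> lip_norm f" if "a \<noteq> b" for a b
    unfolding lip_norm_def using that by (intro cSup_upper[OF _ bdd]) blast
  show ?thesis
  proof (rule lipschitz_onI)
    show "0 \<le> lip_norm f"
      by (rule order_trans[OF _ quotient_le[OF \<open>x \<noteq> y\<close>]]) simp
    show "dist (f a) (f b) \<le> lip_norm f * dist a b" for a b
      using quotient_le[of a b] by (cases "a = b") (auto simp: dist_real_def divide_le_eq mult.commute)
  qed
qed

locale contracting_kernel =
  fixes P :: "'a::{metric_space, second_countable_topology} \<Rightarrow> 'a measure" and \<kappa> :: real
  assumes kernel_measurable: "P \<in> borel \<rightarrow>\<^sub>M prob_algebra borel"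
    and kernel_first_moment: "\<And>z. integrable (P z) (\<lambda>y. dist z y)"
    and kappa_pos: "0 < \<kappa>"
    and W1_contraction: "\<And>z y. W1 (P z) (P y) \<le> (1 - \<kappa>) * dist z y"
begin

lemma prob_space_P: "prob_space (P z)" and sets_P: "sets (P z) = sets borel"
  using measurable_space[OF kernel_measurable, of z] by (simp_all add: space_prob_algebra)

lemma integrable_P_lipschitz:
  fixes h :: "'a \<Rightarrow> real"
  assumes "C-lipschitz_on UNIV h"
  shows "integrable (P z) h"
  using assms prob_space.finite_measure[OF prob_space_P] sets_P kernel_first_moment
  by (rule integrable_lipschitz)

definition markov_op :: "('a \<Rightarrow> real) \<Rightarrow> 'a \<Rightarrow> real" where
  "markov_op h z = (\<integral>y. h y \<partial>P z)"

text \<open>If \<open>\<kappa> > 1\<close> the contraction hypothesis forces all points to coincide; clipping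
  \<open>1 - \<kappa>\<close> at \<open>0\<close> keeps \<open>\<rho>\<close> a valid Lipschitz constant in every case.\<close>
definition \<rho> :: real where
  "\<rho> = max 0 (1 - \<kappa>)"

lemma rho_bounds: "0 \<le> \<rho>" "\<rho> < 1"
  using kappa_pos by (auto simp: \<rho>_def)

lemma rho_eq:
  fixes x y :: 'a
  assumes "x \<noteq> y"
  shows "\<rho> = 1 - \<kappa>"
proof -
  have "0 \<le> W1 (P x) (P y)"
    by (rule W1_nonneg[OF prob_space_P sets_P _ prob_space_P sets_P])
      (rule integrable_P_lipschitz[OF lipschitz_on_dist])+
  then have "0 \<le> (1 - \<kappa>) * dist x y"
    using W1_contraction[of x y] by linarith
  then show ?thesis
    using assms by (simp add: \<rho>_def zero_le_mult_iff)
qed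

lemma lipschitz_markov_op:
  assumes h: "C-lipschitz_on UNIV h"
  shows "(C * \<rho>)-lipschitz_on UNIV (markov_op h)"
proof (rule lipschitz_onI)
  show "0 \<le> C * \<rho>" using lipschitz_on_nonneg[OF h] rho_bounds by simp
  fix a b
  have "dist (markov_op h a) (markov_op h b) \<le> C * W1 (P a) (P b)"
    unfolding markov_op_def dist_real_def
    by (rule lipschitz_integral_diff_le_W1[OF prob_space_P sets_P _ prob_space_P sets_P _ h])
      (rule integrable_P_lipschitz[OF lipschitz_on_dist])+
  also have "\<dots> \<le> C * (\<rho> * dist a b)"
    using lipschitz_on_nonneg[OF h]
    by (intro mult_left_mono order_trans[OF W1_contraction] mult_right_mono) (auto simp: \<rho>_def)
  finally show "dist (markov_op h a) (markov_op h b) \<le> C * \<rho> * dist a b"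
    by (simp add: mult.assoc)
qed

lemma lipschitz_markov_op_iter:
  assumes "C-lipschitz_on UNIV h"
  shows "(C * \<rho> ^ n)-lipschitz_on UNIV ((markov_op ^^ n) h)"
proof (induction n)
  case (Suc n)
  then show ?case
    using lipschitz_markov_op[OF Suc.IH] by (simp add: mult_ac)
qed (use assms in simp)

lemma bind_P_prob:
  assumes \<mu>: "prob_space \<mu>" "sets \<mu> = sets borel"
  shows "prob_space (\<mu> \<bind> P)" "sets (\<mu> \<bind> P) = sets borel"
  using prob_space_bind'[OF _ kernel_measurable] sets_bind'[OF _ kernel_measurable] \<mu>
  by (simp_all add: space_prob_algebra)

lemma P_measurable_subprob: "sets \<mu> = sets borel \<Longrightarrow> P \<in> \<mu> \<rightarrow>\<^sub>M subprob_algebra borel"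
  using measurable_prob_algebraD[OF kernel_measurable] by (simp cong: measurable_cong_sets)

lemma integral_bind_P_lipschitz:
  fixes h :: "'a \<Rightarrow> real"
  assumes \<mu>: "prob_space \<mu>" "sets \<mu> = sets borel" "integrable \<mu> (\<lambda>y. dist w y)"
    and h: "C-lipschitz_on UNIV h"
  shows "integrable (\<mu> \<bind> P) h" "(\<integral>y. h y \<partial>(\<mu> \<bind> P)) = (\<integral>z. markov_op h z \<partial>\<mu>)"
proof -
  have nonneg_bind: "integrable (\<mu> \<bind> P) g \<and> (\<integral>y. g y \<partial>(\<mu> \<bind> P)) = (\<integral>z. markov_op g z \<partial>\<mu>)"
    if g: "D-lipschitz_on UNIV g" "\<And>y. 0 \<le> g y" for g D
  proof -
    have "integrable \<mu> (\<lambda>z. \<integral>y. g y \<partial>P z)"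
      using integrable_lipschitz[OF lipschitz_markov_op[OF g(1)] prob_space.finite_measure[OF \<mu>(1)] \<mu>(2,3)]
      by (simp add: markov_op_def[abs_def])
    from integral_bind_nonneg[OF P_measurable_subprob[OF \<mu>(2)] prob_space.not_empty[OF \<mu>(1)]
        borel_measurable_lipschitz[OF g(1)] g(2) integrable_P_lipschitz[OF g(1)] this]
    show ?thesis by (simp add: markov_op_def)
  qed
  define B where "B y = \<bar>h w\<bar> + C * dist w y" for y
  define A where "A y = h y + B y" for y
  have B: "(0 + C * 1)-lipschitz_on UNIV B"
    unfolding B_def
    by (intro lipschitz_on_add lipschitz_on_constant lipschitz_on_cmult_real_nonneg lipschitz_on_dist
        lipschitz_on_nonneg[OF h])
  have A: "(C + (0 + C * 1))-lipschitz_on UNIV A"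
    unfolding A_def using h B by (rule lipschitz_on_add)
  have B_nonneg: "0 \<le> B y" and A_nonneg: "0 \<le> A y" for y
    using lipschitz_onD[OF h, of y w] lipschitz_on_nonneg[OF h]
    by (auto simp: A_def B_def dist_real_def dist_commute abs_le_iff)
  have h_eq: "h = (\<lambda>y. A y - B y)" by (simp add: A_def)
  note A_bind = nonneg_bind[OF A A_nonneg] and B_bind = nonneg_bind[OF B B_nonneg]
  show "integrable (\<mu> \<bind> P) h"
    unfolding h_eq using A_bind B_bind by (intro Bochner_Integration.integrable_diff) auto
  have markov_op_eq: "markov_op h z = markov_op A z - markov_op B z" for z
    unfolding markov_op_def h_eq
    using integrable_P_lipschitz[OF A] integrable_P_lipschitz[OF B] by (rule Bochner_Integration.integral_diff)
  have "(\<integral>y. h y \<partial>(\<mu> \<bind> P)) = (\<integral>y. A y \<partial>(\<mu> \<bind> P)) - (\<integral>y. B y \<partial>(\<mu> \<bind> P))"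
    unfolding h_eq using A_bind B_bind by (intro Bochner_Integration.integral_diff) auto
  also have "\<dots> = (\<integral>z. markov_op A z \<partial>\<mu>) - (\<integral>z. markov_op B z \<partial>\<mu>)"
    using A_bind B_bind by simp
  also have "\<dots> = (\<integral>z. markov_op h z \<partial>\<mu>)"
    unfolding markov_op_eq
    using integrable_lipschitz[OF lipschitz_markov_op[OF A] prob_space.finite_measure[OF \<mu>(1)] \<mu>(2,3)]
      integrable_lipschitz[OF lipschitz_markov_op[OF B] prob_space.finite_measure[OF \<mu>(1)] \<mu>(2,3)]
    by (rule Bochner_Integration.integral_diff[symmetric])
  finally show "(\<integral>y. h y \<partial>(\<mu> \<bind> P)) = (\<integral>z. markov_op h z \<partial>\<mu>)" .
qed

lemma kpow_prob_first_moment: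
  "prob_space (kpow P n x) \<and> sets (kpow P n x) = sets borel
    \<and> integrable (kpow P n x) (\<lambda>y. dist x y)"
proof (induction n)
  case 0
  have "integrable (return borel x) (\<lambda>y. dist x y)"
    by (rule integrableI_bounded) (simp_all add: nn_integral_return)
  then show ?case by (simp add: prob_space_return)
next
  case (Suc n)
  then show ?case
    using bind_P_prob[of "kpow P n x"]
      integral_bind_P_lipschitz(1)[OF _ _ _ lipschitz_on_dist, of "kpow P n x" x x] by simp
qed

lemma integral_kpow:
  assumes "C-lipschitz_on UNIV g"
  shows "(\<integral>y. g y \<partial>kpow P n x) = (markov_op ^^ n) g x"
  using assms
proof (induction n arbitrary: C g)
  case 0
  then show ?case using integral_return[OF _ borel_measurable_lipschitz] by simp
next
  case (Suc n)
  have "(\<integral>y. g y \<partial>kpow P (Suc n) x) = (\<integral>z. markov_op g z \<partial>kpow P n x)"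
    using kpow_prob_first_moment[of n x]
      integral_bind_P_lipschitz(2)[OF _ _ _ Suc.prems, of "kpow P n x" x] by simp
  also have "\<dots> = (markov_op ^^ n) (markov_op g) x"
    by (rule Suc.IH[OF lipschitz_markov_op[OF Suc.prems]])
  also have "\<dots> = (markov_op ^^ Suc n) g x"
    by (simp only: funpow_Suc_right comp_def)
  finally show ?case .
qed

text \<open>The first moment of the law of \<open>X\<^sub>n\<close> about the starting point obeys
  \<open>e\<^sub>n\<^sub>+\<^sub>1 \<le> e\<^sub>1 + \<rho> e\<^sub>n\<close>, because \<open>z \<mapsto> E\<^sub>z d(x, X\<^sub>1)\<close> is \<open>\<rho>\<close>-Lipschitz.\<close>
lemma kpow_first_moment_le:
  "(\<integral>y. dist x y \<partial>kpow P n x) \<le> markov_op (\<lambda>y. dist x y) x / (1 - \<rho>)"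
proof (induction n)
  case 0
  have "0 \<le> markov_op (\<lambda>y. dist x y) x"
    by (simp add: markov_op_def)
  then show ?case using rho_bounds by (simp add: integral_return)
next
  case (Suc n)
  let ?m = "markov_op (\<lambda>y. dist x y)"
  have \<mu>: "prob_space (kpow P n x)" "sets (kpow P n x) = sets borel"
    "integrable (kpow P n x) (\<lambda>y. dist x y)"
    using kpow_prob_first_moment[of n x] by auto
  have "(\<integral>y. dist x y \<partial>kpow P (Suc n) x) = (\<integral>z. ?m z \<partial>kpow P n x)"
    using integral_bind_P_lipschitz(2)[OF \<mu> lipschitz_on_dist] by simp
  also have "\<dots> \<le> ?m x + (1 * \<rho>) * (\<integral>y. dist x y \<partial>kpow P n x)"
    using lipschitz_integral_deviation[OF lipschitz_markov_op[OF lipschitz_on_dist[of x]] \<mu>]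
    unfolding abs_le_iff by linarith
  also have "\<dots> \<le> ?m x + \<rho> * (?m x / (1 - \<rho>))"
    using mult_left_mono[OF Suc.IH] rho_bounds by simp
  also have "\<dots> = ?m x / (1 - \<rho>)"
    using rho_bounds by (simp add: field_simps)
  finally show ?case .
qed

lemma borel_measurable_markov_op:
  "g \<in> borel_measurable borel \<Longrightarrow> markov_op g \<in> borel_measurable borel"
  unfolding markov_op_def[abs_def]
  by (rule measurable_compose[OF measurable_prob_algebraD[OF kernel_measurable]
        integral_measurable_subprob_algebra])

lemma abs_markov_op_le:
  assumes g: "g \<in> borel_measurable borel" "\<And>y. \<bar>g y\<bar> \<le> R"
  shows "\<bar>markov_op g z\<bar> \<le> R"
proof -
  interpret prob_space "P z" by (rule prob_space_P)
  have "integrable (P z) g"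
    using g sets_P by (intro integrable_const_bound[of _ R]) (auto cong: measurable_cong_sets)
  then have "(\<integral>y. \<bar>g y\<bar> \<partial>P z) \<le> R"
    using g(2) by (intro integral_le_const) auto
  then show ?thesis
    unfolding markov_op_def by (rule order_trans[OF integral_abs_bound])
qed

lemma markov_op_iter_bounded:
  assumes "g \<in> borel_measurable borel" "\<And>y. \<bar>g y\<bar> \<le> R"
  shows "(markov_op ^^ n) g \<in> borel_measurable borel \<and> (\<forall>z. \<bar>(markov_op ^^ n) g z\<bar> \<le> R)"
  by (induction n) (use assms in \<open>auto intro: borel_measurable_markov_op abs_markov_op_le\<close>)

lemma markov_op_iter_truncated_dist_le:
  assumes R: "0 \<le> R"
  shows "(markov_op ^^ n) (\<lambda>y. min (dist x y) R) z
    \<le> markov_op (\<lambda>y. dist x y) x / (1 - \<rho>) + min (\<rho> ^ n * dist x z) R"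
proof -
  let ?h = "\<lambda>y. min (dist x y) R" and ?g = "(markov_op ^^ n) (\<lambda>y. min (dist x y) R)"
  have h: "1-lipschitz_on UNIV ?h" by (rule lipschitz_on_min_const[OF lipschitz_on_dist])
  have \<mu>: "prob_space (kpow P n x)" "sets (kpow P n x) = sets borel"
    "integrable (kpow P n x) (\<lambda>y. dist x y)"
    using kpow_prob_first_moment[of n x] by auto
  have "?g x = (\<integral>y. ?h y \<partial>kpow P n x)"
    by (rule integral_kpow[OF h, symmetric])
  also have "\<dots> \<le> (\<integral>y. dist x y \<partial>kpow P n x)"
    using integrable_lipschitz[OF h prob_space.finite_measure[OF \<mu>(1)] \<mu>(2,3)] \<mu>(3)
    by (rule integral_mono) simp
  also have "\<dots> \<le> markov_op (\<lambda>y. dist x y) x / (1 - \<rho>)"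
    by (rule kpow_first_moment_le)
  finally have "?g x \<le> markov_op (\<lambda>y. dist x y) x / (1 - \<rho>)" .
  moreover have "?g z \<le> ?g x + \<rho> ^ n * dist x z"
    using lipschitz_onD[OF lipschitz_markov_op_iter[OF h], of z x n]
    by (simp add: dist_real_def dist_commute abs_le_iff)
  moreover have "?g z \<le> R"
    using markov_op_iter_bounded[OF borel_measurable_lipschitz[OF h], of R n] R by (simp add: abs_le_iff)
  moreover have "0 \<le> markov_op (\<lambda>y. dist x y) x / (1 - \<rho>)"
    using rho_bounds by (simp add: markov_op_def)
  ultimately show ?thesis by (simp add: min_def)
qed

end

locale invariant_measure = contracting_kernel +
  fixes \<pi> :: "'a measure"
  assumes pi_prob: "prob_space \<pi>" and pi_sets: "sets \<pi> = sets borel"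
    and pi_invariant: "\<pi> \<bind> P = \<pi>"
begin

lemma integral_markov_op_iter_bounded:
  assumes g: "g \<in> borel_measurable borel" "\<And>y. \<bar>g y\<bar> \<le> R"
  shows "(\<integral>y. g y \<partial>\<pi>) = (\<integral>y. (markov_op ^^ n) g y \<partial>\<pi>)"
proof (induction n)
  case (Suc n)
  note g_n = markov_op_iter_bounded[OF g, of n]
  have "(\<integral>y. (markov_op ^^ n) g y \<partial>\<pi>) = (\<integral>y. (markov_op ^^ n) g y \<partial>(\<pi> \<bind> P))"
    by (simp only: pi_invariant)
  also have "\<dots> = (\<integral>y. (markov_op ^^ Suc n) g y \<partial>\<pi>)"
    using g_n prob_space.emeasure_space_1[OF prob_space_P]
    by (subst integral_bind[OF _ _ P_measurable_subprob[OF pi_sets] prob_space.finite_measure[OF pi_prob], of _ R 1])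
      (auto simp: markov_op_def[abs_def])
  finally show ?case using Suc.IH by simp
qed simp

lemma integral_truncated_dist_le:
  assumes R: "0 \<le> R"
  shows "(\<integral>y. min (dist x y) R \<partial>\<pi>) \<le> markov_op (\<lambda>y. dist x y) x / (1 - \<rho>)"
proof -
  define K where "K = markov_op (\<lambda>y. dist x y) x / (1 - \<rho>)"
  let ?h = "\<lambda>y. min (dist x y) R"
  have h: "1-lipschitz_on UNIV ?h" by (rule lipschitz_on_min_const[OF lipschitz_on_dist])
  have h_bounded: "?h \<in> borel_measurable borel" "\<bar>?h y\<bar> \<le> R" for y
    using R by (auto intro: borel_measurable_lipschitz[OF h])
  have J: "(\<lambda>n. \<integral>z. min (\<rho> ^ n * dist x z) R \<partial>\<pi>) \<longlonglongrightarrow> 0"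
    using prob_space.finite_measure[OF pi_prob] _ _ rho_bounds R
    by (rule tendsto_integral_min_power) (simp_all cong: measurable_cong_sets add: pi_sets)
  have "(\<integral>y. ?h y \<partial>\<pi>) \<le> K + (\<integral>z. min (\<rho> ^ n * dist x z) R \<partial>\<pi>)" for n
  proof -
    interpret prob_space \<pi> by (rule pi_prob)
    have "integrable \<pi> (\<lambda>z. min (\<rho> ^ n * dist x z) R)"
      using R rho_bounds pi_sets
      by (intro integrable_const_bound[of _ R]) (auto cong: measurable_cong_sets)
    moreover have "integrable \<pi> ((markov_op ^^ n) ?h)"
      using markov_op_iter_bounded[OF h_bounded, of n] pi_sets
      by (intro integrable_const_bound[of _ R]) (auto cong: measurable_cong_sets)
    ultimately have "(\<integral>y. (markov_op ^^ n) ?h y \<partial>\<pi>) \<le> (\<integral>z. K + min (\<rho> ^ n * dist x z) R \<partial>\<pi>)"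
      using markov_op_iter_truncated_dist_le[OF R] by (intro integral_mono) (auto simp: K_def)
    then show ?thesis
      using integral_markov_op_iter_bounded[OF h_bounded, of n] \<open>integrable \<pi> (\<lambda>z. min _ R)\<close>
      by (simp add: prob_space)
  qed
  moreover have "(\<lambda>n. K + (\<integral>z. min (\<rho> ^ n * dist x z) R \<partial>\<pi>)) \<longlonglongrightarrow> K + 0"
    by (rule tendsto_add[OF tendsto_const J])
  ultimately show ?thesis
    unfolding K_def by (intro LIMSEQ_le_const) auto
qed

lemma invariant_first_moment: "integrable \<pi> (\<lambda>y. dist x y)"
proof -
  interpret prob_space \<pi> by (rule pi_prob)
  define t where "t i = (\<lambda>y. min (dist x y) (real i))" for i
  have t_lipschitz: "1-lipschitz_on UNIV (t i)" for i
    unfolding t_def by (rule lipschitz_on_min_const[OF lipschitz_on_dist])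
  have measurable: "t i \<in> borel_measurable \<pi>" "(\<lambda>y. dist x y) \<in> borel_measurable \<pi>" for i
    using borel_measurable_lipschitz[OF t_lipschitz] borel_measurable_lipschitz[OF lipschitz_on_dist]
    by (simp_all add: pi_sets cong: measurable_cong_sets)
  have t_integrable: "integrable \<pi> (t i)" for i
    using measurable(1) by (intro integrable_const_bound[of _ "real i"] AE_I2) (simp_all add: t_def)
  have t_mono: "mono (\<lambda>i. t i y)" for y
    by (rule monoI) (simp add: t_def)
  have t_lim: "(\<lambda>i. t i y) \<longlonglongrightarrow> dist x y" for y
  proof (rule tendsto_eventually)
    obtain N :: nat where "dist x y \<le> real N" using real_arch_simple by blast
    then show "\<forall>\<^sub>F i in sequentially. t i y = dist x y"
      by (intro eventually_sequentiallyI[of N]) (simp add: t_def)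
  qed
  obtain L where L: "(\<lambda>i. \<integral>y. t i y \<partial>\<pi>) \<longlonglongrightarrow> L"
  proof (rule incseq_convergent)
    show "incseq (\<lambda>i. \<integral>y. t i y \<partial>\<pi>)"
      using t_integrable t_mono by (intro monoI integral_mono) (auto dest: monoD)
    show "\<forall>i. (\<integral>y. t i y \<partial>\<pi>) \<le> markov_op (\<lambda>y. dist x y) x / (1 - \<rho>)"
      unfolding t_def by (intro allI integral_truncated_dist_le) simp
  qed
  show ?thesis
    by (rule integrable_monotone_convergence[OF t_integrable AE_I2[OF t_mono] AE_I2[OF t_lim] L
          measurable(2)])
qed

lemma integral_markov_op_iter_lipschitz:
  assumes g: "C-lipschitz_on UNIV g"
  shows "(\<integral>y. g y \<partial>\<pi>) = (\<integral>y. (markov_op ^^ n) g y \<partial>\<pi>)"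
proof (induction n)
  case (Suc n)
  have "(\<integral>y. (markov_op ^^ n) g y \<partial>\<pi>) = (\<integral>y. (markov_op ^^ n) g y \<partial>(\<pi> \<bind> P))"
    by (simp only: pi_invariant)
  also have "\<dots> = (\<integral>y. (markov_op ^^ Suc n) g y \<partial>\<pi>)"
    using integral_bind_P_lipschitz(2)[OF pi_prob pi_sets invariant_first_moment
        lipschitz_markov_op_iter[OF g]] by simp
  finally show ?case using Suc.IH by simp
qed simp

lemma kpow_integral_deviation:
  assumes f: "C-lipschitz_on UNIV f"
  shows "\<bar>(\<integral>y. f y \<partial>kpow P n x) - (\<integral>y. f y \<partial>\<pi>)\<bar> \<le> C * \<rho> ^ n * eccentricity \<pi> x"
  unfolding integral_kpow[OF f] integral_markov_op_iter_lipschitz[OF f, of n] eccentricity_def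
  by (rule lipschitz_integral_deviation[OF lipschitz_markov_op_iter[OF f] pi_prob pi_sets
        invariant_first_moment])

end

theorem proposition1:
  fixes P :: "'a::polish_space \<Rightarrow> 'a measure"
    and \<pi> :: "'a measure"
    and \<kappa> :: real
    and T T\<^sub>0 :: nat
    and f :: "'a \<Rightarrow> real"
    and x :: 'a
  assumes P_meas: "P \<in> borel \<rightarrow>\<^sub>M prob_algebra borel"
    and P_moment: "\<And>z. integrable (P z) (\<lambda>y. dist z y)"
    and kappa_pos: "\<kappa> > 0"
    and contraction: "\<And>z y. W1 (P z) (P y) \<le> (1 - \<kappa>) * dist z y"
    and pi_prob: "prob_space \<pi>" and pi_sets: "sets \<pi> = sets borel"
    and pi_inv: "\<pi> \<bind> P = \<pi>"
    and T_ge: "T \<ge> 1"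
    and f_lip: "\<exists>C. C-lipschitz_on UNIV f"
  shows "\<bar>(1 / real T) * (\<Sum>k = T\<^sub>0 + 1..T\<^sub>0 + T. \<integral>y. f y \<partial>(kpow P k x))
            - (\<integral>y. f y \<partial>\<pi>)\<bar>
         \<le> (1 - \<kappa>) ^ (T\<^sub>0 + 1) / (\<kappa> * real T) * eccentricity \<pi> x * lip_norm f"
proof -
  interpret invariant_measure P \<kappa> \<pi>
    by (intro invariant_measure.intro contracting_kernel.intro invariant_measure_axioms.intro)
      (fact assms)+
  obtain C where C: "C-lipschitz_on UNIV f" using f_lip by blast
  let ?E = "eccentricity \<pi> x" and ?K = "{T\<^sub>0 + 1..T\<^sub>0 + T}"
  have average: "\<bar>(1 / real T) * (\<Sum>k\<in>?K. \<integral>y. f y \<partial>(kpow P k x)) - (\<integral>y. f y \<partial>\<pi>)\<bar>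
      \<le> (1 / real T) * (\<Sum>k\<in>?K. L * \<rho> ^ k * ?E)" if "L-lipschitz_on UNIV f" for L
    using T_ge kpow_integral_deviation[OF that] by (intro abs_average_diff_le) auto
  show ?thesis
  proof (cases "\<exists>y. y \<noteq> x")
    case True
    then obtain y where "y \<noteq> x" by blast
    have \<rho>: "\<rho> = 1 - \<kappa>" by (rule rho_eq[OF \<open>y \<noteq> x\<close>])
    have f: "(lip_norm f)-lipschitz_on UNIV f" by (rule lipschitz_on_lip_norm[OF C \<open>y \<noteq> x\<close>])
    have "(\<Sum>k\<in>?K. lip_norm f * \<rho> ^ k * ?E) = lip_norm f * ?E * (\<Sum>k\<in>?K. \<rho> ^ k)"
      by (simp add: sum_distrib_left mult_ac)
    also have "\<dots> \<le> lip_norm f * ?E * (\<rho> ^ (T\<^sub>0 + 1) / \<kappa>)"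
      using sum_power_le_geometric[OF rho_bounds, of "T\<^sub>0 + 1" "T\<^sub>0 + T"] lipschitz_on_nonneg[OF f]
      by (intro mult_left_mono) (simp_all add: \<rho> eccentricity_def)
    finally have "(\<Sum>k\<in>?K. lip_norm f * \<rho> ^ k * ?E) \<le> lip_norm f * ?E * (\<rho> ^ (T\<^sub>0 + 1) / \<kappa>)" .
    then have "(1 / real T) * (\<Sum>k\<in>?K. lip_norm f * \<rho> ^ k * ?E)
        \<le> (1 - \<kappa>) ^ (T\<^sub>0 + 1) / (\<kappa> * real T) * ?E * lip_norm f"
      by (simp add: \<rho> divide_le_eq mult_ac)
    then show ?thesis
      using average[OF f] by linarith
  next
    case False
    then have "(\<lambda>y. dist x y) = (\<lambda>_. 0)" by (metis dist_self)
    then have "?E = 0" by (simp add: eccentricity_def)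
    then show ?thesis using average[OF C] by simp
  qed
qed

end
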